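(* Let $p>5$ be a prime, $q=p^h$, and let $\mathcal{F}$ be the projective closure of $ax^n+by^m=1$ over $\mathbb{F}_q$, with $a,b\in\mathbb{F}_q^*$ and $m,n$ positive integers, $n\ge m>2$, $p\nmid mn$. Assume $\mathcal{F}$ is classical with respect to lines and nonclassical with respect to conics. For $P=(u:v:1)\in\mathcal{F}$ with $uv\ne0$, the osculating conic $\mathcal{H}_P$ to $\mathcal{F}$ at $P$ is the irreducible conic $H_P(X,Y,Z)=0$, where $H_P=au^{n-2}X^2+bv^{m-2}Y^2-Z^2$ if $p\mid(m-2)$ and $p\mid(n-2)$; $H_P=au^{n+1}YZ+bv^{m+1}XZ-XY$ if $p\mid(m+1)$ and $p\mid(n+1)$; $H_P=a^4u^{4n-2}X^2+b^4v^{4m-2}Y^2+Z^2-2a^2b^2u^{2n-1}v^{2m-1}XY-2a^2u^{2n-1}XZ-2b^2v^{2m-1}YZ$ if $p\mid(2m-1)$ and $p\mid(2n-1)$; $H_P=b^2v^{2m-1}YZ-a^2u^{2n-2}X^2+2au^{n-1}XZ-Z^2$ if $p\mid(2m-1)$ and $p\mid(n-1)$; $H_P=au^{n-1}XY+bv^{m+1}Z^2-YZ$ if $p\mid(m+1)$ and $p\mid(n-1)$; $H_P=au^{n-1}XZ+bv^{m-2}Y^2-Z^2$ if $p\mid(m-2)$ and $p\mid(n-1)$; $H_P=au^{n-2}X^2+bv^{m-1}YZ-Z^2$ if $p\mid(m-1)$ and $p\mid(n-2)$; $H_P=a^2u^{2n-1}XZ-b^2v^{2m-2}Y^2+2bv^{m-1}YZ-Z^2$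 if $p\mid(m-1)$ and $p\mid(2n-1)$; $H_P=bv^{m-1}XY+au^{n+1}Z^2-XZ$ if $p\mid(m-1)$ and $p\mid(n+1)$.
   Context: For a point $P$ of a plane curve $\mathcal{F}$, the osculating conic at $P$ is the unique conic $\mathcal{C}$ maximizing the intersection multiplicity $I(P,\mathcal{F}\cap\mathcal{C})$. Classicality w.r.t. lines/conics: with $\varphi_j$ the monomials of degree $s\in\{1,2\}$ in $x,y,1$, $\tau$ separating and $D^{(k)}_\tau$ Hasse derivatives, the order sequence is the lexicographically smallest $\varepsilon_0<\dots<\varepsilon_M$ ($M=\binom{s+2}{2}-1$) with $\det(D^{(\varepsilon_i)}_\tau\varphi_j)\ne0$, and the curve is classical if $\varepsilon_i=i$ for all $i$, nonclassical otherwise. *)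

theory Defs
  imports "HOL-Computational_Algebra.Computational_Algebra" "HOL-Combinatorics.Combinatorics" "HOL-Library.Extended_Nat"
begin

(* Conics: homogeneous quadratic forms in X,Y,Z, given by their coefficient tuple
   (c_XX, c_YY, c_ZZ, c_XY, c_XZ, c_YZ).  A conic is a nonzero tuple, up to scalars. *)
type_synonym 'a conic = "'a \<times> 'a \<times> 'a \<times> 'a \<times> 'a \<times> 'a"

definition conic_eval :: "'a::comm_ring_1 conic \<Rightarrow> 'a \<Rightarrow> 'a \<Rightarrow> 'a \<Rightarrow> 'a" where
  "conic_eval c X Y Z = (case c of (cxx, cyy, czz, cxy, cxz, cyz) \<Rightarrow>
      cxx * X^2 + cyy * Y^2 + czz * Z^2 + cxy * X * Y + cxz * X * Z + cyz * Y * Z)"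

definition conic_eval_fps :: "'a::comm_ring_1 conic \<Rightarrow> 'a fps \<Rightarrow> 'a fps \<Rightarrow> 'a fps \<Rightarrow> 'a fps" where
  "conic_eval_fps c X Y Z = (case c of (cxx, cyy, czz, cxy, cxz, cyz) \<Rightarrow>
      fps_const cxx * X^2 + fps_const cyy * Y^2 + fps_const czz * Z^2 + fps_const cxy * X * Y
      + fps_const cxz * X * Z + fps_const cyz * Y * Z)"

definition conic_smult :: "'a::comm_ring_1 \<Rightarrow> 'a conic \<Rightarrow> 'a conic" where
  "conic_smult k c = (case c of (cxx, cyy, czz, cxy, cxz, cyz) \<Rightarrow>
      (k*cxx, k*cyy, k*czz, k*cxy, k*cxz, k*cyz))"

definition is_conic :: "'a::comm_ring_1 conic \<Rightarrow> bool" where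
  "is_conic c \<longleftrightarrow> c \<noteq> (0,0,0,0,0,0)"

definition lin_prod :: "'a::comm_ring_1 \<times> 'a \<times> 'a \<Rightarrow> 'a \<times> 'a \<times> 'a \<Rightarrow> 'a conic" where
  "lin_prod l1 l2 = (case l1 of (\<alpha>1, \<beta>1, \<gamma>1) \<Rightarrow> case l2 of (\<alpha>2, \<beta>2, \<gamma>2) \<Rightarrow>
      (\<alpha>1*\<alpha>2, \<beta>1*\<beta>2, \<gamma>1*\<gamma>2, \<alpha>1*\<beta>2 + \<beta>1*\<alpha>2, \<alpha>1*\<gamma>2 + \<gamma>1*\<alpha>2, \<beta>1*\<gamma>2 + \<gamma>1*\<beta>2))"

(* irreducible conic (over the algebraically closed ground field): not a product of two linear forms *)
definition irreducible_conic :: "'a::comm_ring_1 conic \<Rightarrow> bool" where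
  "irreducible_conic c \<longleftrightarrow> is_conic c \<and> \<not> (\<exists>l1 l2. c = lin_prod l1 l2)"

(* Affine points of F: a x^n + b y^m = 1 (the points (u:v:1) of the projective closure) *)
definition on_curve :: "'a::field \<Rightarrow> 'a \<Rightarrow> nat \<Rightarrow> nat \<Rightarrow> 'a \<Rightarrow> 'a \<Rightarrow> bool" where
  "on_curve a b n m u v \<longleftrightarrow> a * u^n + b * v^m = 1"

(* The branch of F centred at the affine point (u,v) with v \<noteq> 0 (a nonsingular point where
   t = x - u is a local parameter): x = u + t, y = Y(t) with Y(0) = v. *)
definition branch_y :: "'a::field \<Rightarrow> 'a \<Rightarrow> nat \<Rightarrow> nat \<Rightarrow> 'a \<Rightarrow> 'a \<Rightarrow> 'a fps" where
  "branch_y a b n m u v = (THE Y. fps_nth Y 0 = v \<and>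
      fps_const a * (fps_const u + fps_X)^n + fps_const b * Y^m = 1)"

definition branch_x :: "'a::field \<Rightarrow> 'a fps" where
  "branch_x u = fps_const u + fps_X"

(* Intersection multiplicity I(P, F \<inter> C) at P = (u:v:1), computed on the branch centred at P
   (the order in t of C(x(t), y(t), 1)); infinity if C vanishes on the branch. *)
definition int_mult :: "'a::field \<Rightarrow> 'a \<Rightarrow> nat \<Rightarrow> nat \<Rightarrow> 'a \<Rightarrow> 'a \<Rightarrow> 'a conic \<Rightarrow> enat" where
  "int_mult a b n m u v c = (let G = conic_eval_fps c (branch_x u) (branch_y a b n m u v) 1 in
      if G = 0 then \<infinity> else enat (subdegree G))"

definition osculating_conic :: "'a::field \<Rightarrow> 'a \<Rightarrow> nat \<Rightarrow> nat \<Rightarrow> 'a \<Rightarrow> 'a \<Rightarrow> 'a conic \<Rightarrow> bool" where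
  "osculating_conic a b n m u v c \<longleftrightarrow> is_conic c \<and>
     (\<forall>d. is_conic d \<longrightarrow> int_mult a b n m u v d \<le> int_mult a b n m u v c) \<and>
     (\<forall>d. is_conic d \<longrightarrow> int_mult a b n m u v d = int_mult a b n m u v c \<longrightarrow>
          (\<exists>k. d = conic_smult k c))"

definition hasse :: "nat \<Rightarrow> 'a::comm_ring_1 fps \<Rightarrow> 'a fps" where
  "hasse k f = Abs_fps (\<lambda>j. of_nat ((j + k) choose k) * fps_nth f (j + k))"

definition det_nat :: "nat \<Rightarrow> (nat \<Rightarrow> nat \<Rightarrow> 'a::comm_ring_1) \<Rightarrow> 'a" where
  "det_nat N M = (\<Sum>\<sigma> | \<sigma> permutes {..<N}. of_int (sign \<sigma>) * (\<Prod>i<N. M i (\<sigma> i)))"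

definition monomials :: "nat \<Rightarrow> 'b::comm_ring_1 \<Rightarrow> 'b \<Rightarrow> 'b list" where
  "monomials s x y = (if s = 1 then [1, x, y] else [1, x, y, x^2, x*y, y^2])"

(* F is classical w.r.t. the linear system of curves of degree s (order sequence 0,1,...,M):
   the Wronskian det(D^(i) phi_j)_{0 \<le> i,j \<le> M} is nonzero in the function field, tested through
   the embedding of the function field into K((t)) given by the branch at a nonsingular point
   (separating variable tau = x, which corresponds to t = x - u). *)
definition classical_wrt :: "nat \<Rightarrow> 'a::field \<Rightarrow> 'a \<Rightarrow> nat \<Rightarrow> nat \<Rightarrow> bool" where
  "classical_wrt s a b n m \<longleftrightarrow>
     (\<forall>u v. on_curve a b n m u v \<and> v \<noteq> 0 \<longrightarrow>
        (let phi = monomials s (branch_x u) (branch_y a b n m u v); M = length phi - 1 in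
          det_nat (M + 1) (\<lambda>i j. hasse i (phi ! j)) \<noteq> 0))"

end

theory Submission
  imports Defs
begin

(* Let t = x - u be the local parameter at P and y(t) the branch of the curve through P, so that
   s + r = 1 in K[[t]] for s = a x^n and r = b y^m.  In characteristic p every power series
   satisfies f^k = f(0)^k mod t^p whenever p divides k.  As p >= 5, each of the divisibility
   conditions n = 2, -1, 1/2, 1 (mod p) yields a congruence s = A x^2, s x = A, s^2 = A x or
   s = A x modulo t^5 with a constant A, and similarly for r.  Substituting these into s + r = 1
   shows that H_P meets the branch with multiplicity at least 5.  The same residues of n and m
   show that y''(0) <> 0, i.e. P is not a flex, and at a non-flex point the conics meeting the
   branch with multiplicity at least 5 are all proportional; so H_P is the osculating conic.
   It is irreducible because its discriminant does not vanish. *)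

section \<open>Power series\<close>

lemma fps_X_power_dvd_iff:
  fixes f :: "'a::comm_ring_1 fps"
  shows "fps_X ^ k dvd f \<longleftrightarrow> (\<forall>i<k. f $ i = 0)"
proof
  assume "fps_X ^ k dvd f"
  then show "\<forall>i<k. f $ i = 0" by (auto simp: fps_X_power_mult_nth)
next
  assume "\<forall>i<k. f $ i = 0"
  then have "f = fps_X ^ k * fps_shift k f"
    by (intro fps_conv_fps_X_power_mult_fps_shift) (auto intro: subdegree_geI)
  then show "fps_X ^ k dvd f" by (rule dvdI)
qed

lemma fps_X_power_CHAR_dvd_power_minus_const:
  fixes f :: "'a::comm_ring_1 fps"
  assumes "prime CHAR('a)" "CHAR('a) dvd N"
  shows "fps_X ^ CHAR('a) dvd f ^ N - fps_const ((f $ 0) ^ N)"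
proof -
  let ?p = "CHAR('a)"
  obtain k where N: "N = k * ?p" using assms(2) by (metis dvdE mult.commute)
  define h where "h = f ^ k - fps_const ((f $ 0) ^ k)"
  have "fps_X dvd h" by (simp add: h_def fps_X_power_dvd_iff[of 1, simplified] fps_power_zeroth)
  then have "fps_X ^ ?p dvd h ^ ?p" by (rule dvd_power_same)
  moreover have "f ^ N = fps_const ((f $ 0) ^ k) ^ ?p + h ^ ?p"
    using freshmans_dream[where x = "fps_const ((f $ 0) ^ k)" and y = h] assms(1)
    by (simp add: N h_def power_mult)
  ultimately show ?thesis by (simp add: N power_mult fps_const_power)
qed

lemma fps_nth_0_mult_power_nth_1:
  fixes f :: "'a::comm_ring_1 fps"
  shows "f $ 0 * (f ^ k) $ 1 = of_nat k * (f $ 0) ^ k * f $ 1"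
proof (induction k)
  case (Suc k)
  have "f $ 0 * (f ^ Suc k) $ 1 = f $ 0 * (f $ 0 * (f ^ k) $ 1) + f $ 0 * f $ 1 * (f $ 0) ^ k"
    by (simp add: fps_mult_nth fps_power_zeroth algebra_simps)
  with Suc show ?case by (simp add: algebra_simps)
qed simp

lemma fps_nth_0_sq_mult_power_nth_2:
  fixes f :: "'a::comm_ring_1 fps"
  shows "2 * (f $ 0) ^ 2 * (f ^ k) $ 2 =
    of_nat k * (f $ 0) ^ k * (2 * f $ 0 * f $ 2 + (of_nat k - 1) * (f $ 1) ^ 2)"
proof (induction k)
  case (Suc k)
  have "(f ^ Suc k) $ 2 = f $ 0 * (f ^ k) $ 2 + f $ 1 * (f ^ k) $ 1 + f $ 2 * (f $ 0) ^ k"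
    by (simp add: fps_mult_nth numeral_2_eq_2 fps_power_zeroth)
  then have "2 * (f $ 0) ^ 2 * (f ^ Suc k) $ 2 = f $ 0 * (2 * (f $ 0) ^ 2 * (f ^ k) $ 2)
      + 2 * f $ 0 * f $ 1 * (f $ 0 * (f ^ k) $ 1) + 2 * (f $ 0) ^ 2 * f $ 2 * (f $ 0) ^ k"
    by (simp add: algebra_simps power2_eq_square)
  also have "\<dots> =
      f $ 0 * (of_nat k * (f $ 0) ^ k * (2 * f $ 0 * f $ 2 + (of_nat k - 1) * (f $ 1) ^ 2))
      + 2 * f $ 0 * f $ 1 * (of_nat k * (f $ 0) ^ k * f $ 1)
      + 2 * (f $ 0) ^ 2 * f $ 2 * (f $ 0) ^ k"
    by (simp only: Suc.IH fps_nth_0_mult_power_nth_1)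
  finally show ?case by (simp add: algebra_simps power2_eq_square)
qed simp

lemma fps_power2_nth_if_nth_0_eq_0:
  fixes w :: "'a::comm_ring_1 fps"
  assumes "w $ 0 = 0"
  shows "(w ^ 2) $ 0 = 0" "(w ^ 2) $ 1 = 0" "(w ^ 2) $ 2 = (w $ 1) ^ 2"
    "(w ^ 2) $ 3 = 2 * w $ 1 * w $ 2" "(w ^ 2) $ 4 = 2 * w $ 1 * w $ 3 + (w $ 2) ^ 2"
  using assms
  by (simp_all add: power2_eq_square fps_mult_nth numeral_eq_Suc atMost_Suc algebra_simps)

lemma fps_power_root_exists:
  fixes g :: "'a::field fps"
  assumes m: "of_nat m \<noteq> (0::'a)" and v: "v \<noteq> 0" and g0: "g $ 0 = v ^ m"
  shows "\<exists>y. y $ 0 = v \<and> y ^ m = g"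
proof -
  define P where "P = (fps_const v + fps_X) ^ m - fps_const (v ^ m)"
  have P0: "P $ 0 = 0" by (simp add: P_def fps_power_zeroth)
  have "v * P $ 1 = of_nat m * v ^ m"
    using fps_nth_0_mult_power_nth_1[of "fps_const v + fps_X" m] by (simp add: P_def)
  then have P1: "P $ 1 \<noteq> 0" using m v by auto
  have P_oo: "P oo q = (fps_const v + q) ^ m - fps_const (v ^ m)" if "q $ 0 = 0" for q
    using that fps_compose_power[OF that, of "fps_const v + fps_X" m]
    by (simp add: P_def fps_compose_sub_distrib fps_compose_add_distrib)
  define h where "h = g - fps_const (v ^ m)"
  have h0: "h $ 0 = 0" by (simp add: h_def g0)
  define q where "q = fps_inv P oo h"
  have q0: "q $ 0 = 0" by (simp add: q_def fps_inv_def)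
  have "P oo q = h"
    using fps_compose_assoc[OF h0, of "fps_inv P" P] fps_inv_right[OF P0 P1] h0
    by (simp add: q_def fps_inv_def)
  then have "(fps_const v + q) ^ m = g" by (simp add: P_oo[OF q0] h_def)
  moreover have "(fps_const v + q) $ 0 = v" by (simp add: q0)
  ultimately show ?thesis by blast
qed

lemma fps_power_eq_imp_eq:
  fixes y z :: "'a::field fps"
  assumes "y ^ m = z ^ m" "y $ 0 = z $ 0" "z $ 0 \<noteq> 0" "of_nat m \<noteq> (0::'a)"
  shows "y = z"
proof -
  define S where "S = (\<Sum>i<m. z ^ (m - Suc i) * y ^ i)"
  have "S $ 0 = (\<Sum>i<m. (z $ 0) ^ (m - Suc i) * (z $ 0) ^ i)"
    using assms(2) by (simp add: S_def fps_sum_nth fps_power_zeroth)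
  also have "\<dots> = of_nat m * (z $ 0) ^ (m - 1)"
    by (simp flip: power_add)
  finally have "S \<noteq> 0" using assms(3,4) by (metis fps_zero_nth mult_eq_0_iff power_not_zero)
  moreover have "(y - z) * S = 0"
    using assms(1) power_diff_sumr2[of y m z] by (simp add: S_def)
  ultimately show ?thesis by simp
qed

section \<open>The branch through a point of the curve\<close>

lemma branch_equation_ex1:
  fixes a b u v :: "'a::field"
  assumes m: "of_nat m \<noteq> (0::'a)" and v: "v \<noteq> 0" and b: "b \<noteq> 0" and P: "on_curve a b n m u v"
  shows "\<exists>!y. y $ 0 = v \<and> fps_const a * (fps_const u + fps_X) ^ n + fps_const b * y ^ m = 1"
proof -
  define A where "A = fps_const a * (fps_const u + fps_X) ^ n"
  define g where "g = fps_const (inverse b) * (1 - A)"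
  have unit: "fps_const b * fps_const (inverse b) = (1 :: 'a fps)" using b by simp
  have eq_iff: "A + fps_const b * z = 1 \<longleftrightarrow> z = g" for z
  proof
    assume "A + fps_const b * z = 1"
    with unit show "z = g" unfolding g_def by algebra
  next
    assume "z = g"
    with unit show "A + fps_const b * z = 1" unfolding g_def by algebra
  qed
  have "g $ 0 = v ^ m"
    using P b by (simp add: A_def g_def on_curve_def fps_power_zeroth field_simps)
  then obtain y where y: "y $ 0 = v" "y ^ m = g"
    using fps_power_root_exists[OF m v] by blast
  show ?thesis unfolding A_def [symmetric] eq_iff
  proof (rule ex1I[of _ y])
    fix z assume "z $ 0 = v \<and> z ^ m = g"
    with y v show "z = y" by (metis fps_power_eq_imp_eq[OF _ _ _ m])
  qed (use y in simp)
qed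

(* For F = a x^n + b y^m - 1 the flex condition F_xx F_y^2 - 2 F_xy F_x F_y + F_yy F_x^2 = 0
   at (u, v), divided by n m a b u^(n-2) v^(m-2), reads hessian_factor n m (a u^n) (b v^m) = 0. *)
definition hessian_factor :: "'a::comm_ring_1 \<Rightarrow> 'a \<Rightarrow> 'a \<Rightarrow> 'a \<Rightarrow> 'a" where
  "hessian_factor N M S R = (N - 1) * M * R + (M - 1) * N * S"

lemma hessian_factor_diagonal: "S + R = 1 \<Longrightarrow> hessian_factor N N S R = (N - 1) * N"
  unfolding hessian_factor_def by (metis add.commute distrib_left mult.commute mult_1)

lemma hessian_factor_eq_0_if_flex:
  fixes a b u :: "'a::field" and y :: "'a fps"
  assumes curve: "fps_const a * (fps_const u + fps_X) ^ n + fps_const b * y ^ m = 1"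
    and y2: "y $ 2 = 0" and "of_nat n \<noteq> (0::'a)" "a \<noteq> 0" "u \<noteq> 0" "y $ 0 \<noteq> 0"
  shows "hessian_factor (of_nat n) (of_nat m) (a * u ^ n) (b * (y $ 0) ^ m) = 0"
proof -
  define x where "x = fps_const u + fps_X"
  define N M S R where "N = (of_nat n :: 'a)" and "M = (of_nat m :: 'a)"
    and "S = a * u ^ n" and "R = b * (y $ 0) ^ m"
  let ?v = "y $ 0" and ?y1 = "y $ 1"
  have "(fps_const a * x ^ n + fps_const b * y ^ m) $ j = 0" if "j \<in> {1, 2}" for j
    using curve that by (auto simp: x_def)
  then have c1: "a * (x ^ n) $ 1 + b * (y ^ m) $ 1 = 0"
    and c2: "a * (x ^ n) $ 2 + b * (y ^ m) $ 2 = 0"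
    by auto
  have x1: "u * (x ^ n) $ 1 = N * u ^ n" and y1: "?v * (y ^ m) $ 1 = M * ?v ^ m * ?y1"
    using fps_nth_0_mult_power_nth_1[of x n] fps_nth_0_mult_power_nth_1[of y m]
    by (simp_all add: x_def N_def M_def)
  have "N * S * ?v + M * R * u * ?y1 = a * ?v * (u * (x ^ n) $ 1) + b * u * (?v * (y ^ m) $ 1)"
    by (simp only: x1 y1) (simp add: S_def R_def algebra_simps)
  also have "\<dots> = u * ?v * (a * (x ^ n) $ 1 + b * (y ^ m) $ 1)" by (simp add: algebra_simps)
  also have "\<dots> = 0" by (simp only: c1 mult_zero_right)
  finally have E1: "N * S * ?v + M * R * u * ?y1 = 0" .
  have x2: "2 * u ^ 2 * (x ^ n) $ 2 = N * u ^ n * (N - 1)"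
    and y2': "2 * ?v ^ 2 * (y ^ m) $ 2 = M * ?v ^ m * (M - 1) * ?y1 ^ 2"
    using fps_nth_0_sq_mult_power_nth_2[of x n] fps_nth_0_sq_mult_power_nth_2[of y m] y2
    by (simp_all add: x_def N_def M_def algebra_simps)
  have "N * (N - 1) * S * ?v ^ 2 + M * (M - 1) * R * u ^ 2 * ?y1 ^ 2
      = a * ?v ^ 2 * (2 * u ^ 2 * (x ^ n) $ 2) + b * u ^ 2 * (2 * ?v ^ 2 * (y ^ m) $ 2)"
    by (simp only: x2 y2') (simp add: S_def R_def algebra_simps)
  also have "\<dots> = 2 * u ^ 2 * ?v ^ 2 * (a * (x ^ n) $ 2 + b * (y ^ m) $ 2)"
    by (simp add: algebra_simps)
  also have "\<dots> = 0" by (simp only: c2 mult_zero_right)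
  finally have E2: "N * (N - 1) * S * ?v ^ 2 + M * (M - 1) * R * u ^ 2 * ?y1 ^ 2 = 0" .
  have "N * S * ?v ^ 2 * ((N - 1) * M * R + (M - 1) * N * S)
      = M * R * (N * (N - 1) * S * ?v ^ 2 + M * (M - 1) * R * u ^ 2 * ?y1 ^ 2)
        - (M - 1) * (M * R * u * ?y1 - N * S * ?v) * (N * S * ?v + M * R * u * ?y1)"
    by (simp add: algebra_simps power2_eq_square)
  also have "\<dots> = 0" using E1 E2 by simp
  finally show ?thesis
    using assms(3-) by (simp add: hessian_factor_def N_def M_def S_def R_def)
qed

section \<open>Conics along a branch\<close>

lemma conic_eval_fps_expand:
  fixes w :: "'a::comm_ring_1 fps"
  shows "conic_eval_fps (c1, c2, c3, c4, c5, c6) (fps_const u + fps_X) (fps_const v + w) 1 =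
    fps_const (conic_eval (c1, c2, c3, c4, c5, c6) u v 1)
    + fps_const (2 * c1 * u + c4 * v + c5) * fps_X + fps_const (2 * c2 * v + c4 * u + c6) * w
    + fps_const c1 * fps_X ^ 2 + fps_const c4 * (fps_X * w) + fps_const c2 * w ^ 2"
  by (simp add: conic_eval_fps_def conic_eval_def fps_const_add [symmetric]
      fps_const_mult [symmetric] fps_const_power [symmetric] fps_numeral_fps_const [symmetric]
      algebra_simps power2_eq_square
      del: fps_const_add fps_const_mult fps_const_power)

(* 2 c2 v + c4 u + c6 is the Y-derivative of the conic at (u, v, 1). *)
lemma conic_eq_0_if_order_5:
  fixes w :: "'a::field fps"
  assumes w0: "w $ 0 = 0" and w2: "w $ 2 \<noteq> 0"
    and order: "fps_X ^ 5 dvd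
      conic_eval_fps (c1, c2, c3, c4, c5, c6) (fps_const u + fps_X) (fps_const v + w) 1"
    and dY: "2 * c2 * v + c4 * u + c6 = 0"
  shows "(c1, c2, c3, c4, c5, c6) = (0, 0, 0, 0, 0, 0)"
proof -
  let ?G = "conic_eval_fps (c1, c2, c3, c4, c5, c6) (fps_const u + fps_X) (fps_const v + w) 1"
  have G: "?G = fps_const (conic_eval (c1, c2, c3, c4, c5, c6) u v 1)
      + fps_const (2 * c1 * u + c4 * v + c5) * fps_X
      + fps_const c1 * fps_X ^ 2 + fps_const c4 * (fps_X * w) + fps_const c2 * w ^ 2"
    using conic_eval_fps_expand[of c1 c2 c3 c4 c5 c6 u v w] dY by simp
  have coeff: "?G $ j = 0" if "j < 5" for j
    using order that by (simp add: fps_X_power_dvd_iff)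
  have G0: "conic_eval (c1, c2, c3, c4, c5, c6) u v 1 = 0"
    using coeff[of 0] w0 unfolding G by (simp add: fps_power2_nth_if_nth_0_eq_0)
  have G1: "2 * c1 * u + c4 * v + c5 = 0"
    using coeff[of 1] fps_power2_nth_if_nth_0_eq_0(2)[OF w0] w0 unfolding G by simp
  have G2: "c1 + c4 * w $ 1 + c2 * (w $ 1) ^ 2 = 0"
    using coeff[of 2] w0 unfolding G by (simp add: fps_power2_nth_if_nth_0_eq_0)
  have G3: "(c4 + 2 * c2 * w $ 1) * w $ 2 = 0"
    using coeff[of 3] w0 unfolding G by (simp add: fps_power2_nth_if_nth_0_eq_0 algebra_simps)
  have G4: "(c4 + 2 * c2 * w $ 1) * w $ 3 + c2 * (w $ 2) ^ 2 = 0"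
    using coeff[of 4] w0 unfolding G by (simp add: fps_power2_nth_if_nth_0_eq_0 algebra_simps)
  from G3 w2 have c4: "c4 = - 2 * c2 * w $ 1" by (simp add: add_eq_0_iff)
  from G4 w2 have "c2 = 0" by (simp add: c4)
  with c4 G2 G1 dY G0 show ?thesis by (simp add: conic_eval_def)
qed

lemma conic_proportional_if_order_5:
  fixes y :: "'a::field fps"
  assumes y2: "y $ 2 \<noteq> 0" and "is_conic c"
    and order_c: "fps_X ^ 5 dvd conic_eval_fps c (fps_const u + fps_X) y 1"
    and order_d: "fps_X ^ 5 dvd conic_eval_fps d (fps_const u + fps_X) y 1"
  shows "\<exists>k. d = conic_smult k c"
proof -
  obtain c1 c2 c3 c4 c5 c6 where c: "c = (c1, c2, c3, c4, c5, c6)" by (cases c) auto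
  obtain d1 d2 d3 d4 d5 d6 where d: "d = (d1, d2, d3, d4, d5, d6)" by (cases d) auto
  define v where "v = y $ 0"
  define w where "w = y - fps_const v"
  have y: "y = fps_const v + w" and w0: "w $ 0 = 0" and w2: "w $ 2 \<noteq> 0"
    using y2 by (simp_all add: w_def v_def)
  define \<delta>c where "\<delta>c = 2 * c2 * v + c4 * u + c6"
  define \<delta>d where "\<delta>d = 2 * d2 * v + d4 * u + d6"
  have "\<delta>c \<noteq> 0"
    using conic_eq_0_if_order_5[OF w0 w2, of c1 c2 c3 c4 c5 c6 u] order_c \<open>is_conic c\<close>
    by (auto simp: c y is_conic_def \<delta>c_def)
  define k where "k = \<delta>d / \<delta>c"
  let ?e = "(d1 - k * c1, d2 - k * c2, d3 - k * c3, d4 - k * c4, d5 - k * c5, d6 - k * c6)"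
  have "conic_eval_fps ?e (fps_const u + fps_X) y 1 = conic_eval_fps d (fps_const u + fps_X) y 1
      - fps_const k * conic_eval_fps c (fps_const u + fps_X) y 1"
    by (simp add: c d conic_eval_fps_def fps_const_mult [symmetric] fps_const_sub [symmetric]
        algebra_simps del: fps_const_mult fps_const_sub)
  then have order_e: "fps_X ^ 5 dvd conic_eval_fps ?e (fps_const u + fps_X) (fps_const v + w) 1"
    using order_c order_d by (simp add: y)
  have "2 * (d2 - k * c2) * v + (d4 - k * c4) * u + (d6 - k * c6) = \<delta>d - k * \<delta>c"
    by (simp add: \<delta>c_def \<delta>d_def algebra_simps)
  also have "\<dots> = 0"
    using \<open>\<delta>c \<noteq> 0\<close> by (simp add: k_def)
  finally have "?e = (0, 0, 0, 0, 0, 0)" by (rule conic_eq_0_if_order_5[OF w0 w2 order_e])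
  then have "d = conic_smult k c" by (simp add: c d conic_smult_def)
  then show ?thesis ..
qed

lemma int_mult_ge_iff:
  "enat k \<le> int_mult a b n m u v c \<longleftrightarrow>
     fps_X ^ k dvd conic_eval_fps c (branch_x u) (branch_y a b n m u v) 1"
  by (cases "conic_eval_fps c (branch_x u) (branch_y a b n m u v) 1 = 0")
     (simp_all add: int_mult_def fps_dvd_iff fps_X_power_subdegree)

lemma conic_eval_fps_conic_smult:
  "conic_eval_fps (conic_smult k c) X Y Z = fps_const k * conic_eval_fps c X Y Z"
  by (cases c) (simp add: conic_eval_fps_def conic_smult_def fps_const_mult [symmetric]
      algebra_simps del: fps_const_mult)

lemma int_mult_conic_smult:
  "k \<noteq> 0 \<Longrightarrow> int_mult a b n m u v (conic_smult k c) = int_mult a b n m u v c"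
  by (simp add: int_mult_def Let_def conic_eval_fps_conic_smult)

lemma osculating_conic_if_int_mult_ge_5:
  assumes y2: "branch_y a b n m u v $ 2 \<noteq> 0" and "is_conic H"
    and H5: "5 \<le> int_mult a b n m u v H"
  shows "osculating_conic a b n m u v H"
proof -
  let ?I = "int_mult a b n m u v"
  have ge_5_iff: "5 \<le> ?I d \<longleftrightarrow>
      fps_X ^ 5 dvd conic_eval_fps d (fps_const u + fps_X) (branch_y a b n m u v) 1" for d
    using int_mult_ge_iff[of 5] by (simp add: numeral_eq_enat branch_x_def)
  have proportional: "\<exists>k. k \<noteq> 0 \<and> d = conic_smult k H" if "is_conic d" "5 \<le> ?I d" for d
  proof -
    from that H5 obtain k where "d = conic_smult k H"
      using conic_proportional_if_order_5[OF y2 \<open>is_conic H\<close>, of u d]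
      by (auto simp: ge_5_iff)
    moreover from this \<open>is_conic d\<close> have "k \<noteq> 0"
      by (cases H) (auto simp: conic_smult_def is_conic_def)
    ultimately show ?thesis by blast
  qed
  have "?I d \<le> ?I H \<and> (?I d = ?I H \<longrightarrow> (\<exists>k. d = conic_smult k H))" if "is_conic d" for d
  proof (cases "5 \<le> ?I d")
    case True
    with proportional[OF that] show ?thesis by (auto simp: int_mult_conic_smult)
  next
    case False
    with H5 show ?thesis by auto
  qed
  with \<open>is_conic H\<close> show ?thesis by (simp add: osculating_conic_def)
qed

(* Four times the determinant of the symmetric 3x3 matrix of the quadratic form. *)
definition conic_disc :: "'a::comm_ring_1 conic \<Rightarrow> 'a" where
  "conic_disc c = (case c of (cxx, cyy, czz, cxy, cxz, cyz) \<Rightarrow>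
      4 * cxx * cyy * czz + cxy * cxz * cyz - cxx * cyz ^ 2 - cyy * cxz ^ 2 - czz * cxy ^ 2)"

lemma conic_disc_lin_prod: "conic_disc (lin_prod l1 l2) = 0"
  by (cases l1; cases l2) (simp add: conic_disc_def lin_prod_def algebra_simps power2_eq_square)

lemma irreducible_conic_if_disc_nonzero: "is_conic c \<Longrightarrow> conic_disc c \<noteq> 0 \<Longrightarrow> irreducible_conic c"
  unfolding irreducible_conic_def using conic_disc_lin_prod by metis

section \<open>Congruences modulo t^5\<close>

lemmas conic_eval_fps_unfold = conic_eval_fps_def prod.case fps_const_mult [symmetric]
  fps_const_power [symmetric] fps_const_neg [symmetric] fps_numeral_fps_const [symmetric]
  fps_const_0_eq_0 fps_const_1_eq_1 power_one mult_1_right mult_zero_left add_0_right add_0_left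
  mult_minus1

(* Here s, r stand for a x^n and b y^m on the branch and d for t^5.  The suffixes of the
   conic_congruence and osculating_conic lemmas record the residues of m and n modulo p. *)
context
  fixes s r x y d :: "'a::field fps"
  assumes curve: "s + r = 1"
begin

lemma conic_congruence_m2_n2:
  "d dvd s - fps_const A * x ^ 2 \<Longrightarrow> d dvd r - fps_const B * y ^ 2 \<Longrightarrow>
    d dvd conic_eval_fps (A, B, -1, 0, 0, 0) x y 1"
  using curve unfolding conic_eval_fps_unfold dvd_def by algebra

lemma conic_congruence_m_minus_1_n_minus_1:
  "d dvd s * x - fps_const A \<Longrightarrow> d dvd r * y - fps_const B \<Longrightarrow>
    d dvd conic_eval_fps (0, 0, 0, -1, B, A) x y 1"
  using curve unfolding conic_eval_fps_unfold dvd_def by algebra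

lemma conic_congruence_m_half_n_half:
  "d dvd s ^ 2 - fps_const A * x \<Longrightarrow> d dvd r ^ 2 - fps_const B * y \<Longrightarrow>
    d dvd conic_eval_fps (A ^ 2, B ^ 2, 1, -2 * A * B, -2 * A, -2 * B) x y 1"
  using curve unfolding conic_eval_fps_unfold dvd_def by algebra

lemma conic_congruence_m_half_n1:
  "d dvd s - fps_const A * x \<Longrightarrow> d dvd r ^ 2 - fps_const B * y \<Longrightarrow>
    d dvd conic_eval_fps (- (A ^ 2), 0, -1, 0, 2 * A, B) x y 1"
  using curve unfolding conic_eval_fps_unfold dvd_def by algebra

lemma conic_congruence_m_minus_1_n1:
  "d dvd s - fps_const A * x \<Longrightarrow> d dvd r * y - fps_const B \<Longrightarrow>
    d dvd conic_eval_fps (0, 0, B, A, 0, -1) x y 1"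
  using curve unfolding conic_eval_fps_unfold dvd_def by algebra

lemma conic_congruence_m2_n1:
  "d dvd s - fps_const A * x \<Longrightarrow> d dvd r - fps_const B * y ^ 2 \<Longrightarrow>
    d dvd conic_eval_fps (0, B, -1, 0, A, 0) x y 1"
  using curve unfolding conic_eval_fps_unfold dvd_def by algebra

lemma conic_congruence_m1_n2:
  "d dvd s - fps_const A * x ^ 2 \<Longrightarrow> d dvd r - fps_const B * y \<Longrightarrow>
    d dvd conic_eval_fps (A, 0, -1, 0, 0, B) x y 1"
  using curve unfolding conic_eval_fps_unfold dvd_def by algebra

lemma conic_congruence_m1_n_half:
  "d dvd s ^ 2 - fps_const A * x \<Longrightarrow> d dvd r - fps_const B * y \<Longrightarrow>
    d dvd conic_eval_fps (0, - (B ^ 2), -1, 0, A, 2 * B) x y 1"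
  using curve unfolding conic_eval_fps_unfold dvd_def by algebra

lemma conic_congruence_m1_n_minus_1:
  "d dvd s * x - fps_const A \<Longrightarrow> d dvd r - fps_const B * y \<Longrightarrow>
    d dvd conic_eval_fps (0, 0, A, B, -1, 0) x y 1"
  using curve unfolding conic_eval_fps_unfold dvd_def by algebra

end

section \<open>The nine cases\<close>

locale fermat_curve_point =
  fixes p n m :: nat and a b u v :: "'a::field"
  assumes char: "CHAR('a) = p" and prime: "prime p" and p_ge_5: "5 \<le> p"
    and nonzero: "a \<noteq> 0" "b \<noteq> 0" "u \<noteq> 0" "v \<noteq> 0"
    and on_curve: "on_curve a b n m u v"
    and not_dvd: "\<not> p dvd m" "\<not> p dvd n"
    and exponents: "2 \<le> m" "2 \<le> n"
begin

abbreviation x :: "'a fps" where "x \<equiv> branch_x u"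
abbreviation y :: "'a fps" where "y \<equiv> branch_y a b n m u v"

lemma of_nat_eq_if_dvd_diff: "p dvd j - i \<Longrightarrow> i \<le> j \<Longrightarrow> (of_nat j :: 'a) = of_nat i"
  using of_nat_eq_0_iff_char_dvd[of "j - i", where 'a = 'a] by (simp add: char of_nat_diff)

lemma of_nat_eq_minus_1_if_dvd: "p dvd j + 1 \<Longrightarrow> (of_nat j :: 'a) = - 1"
  using of_nat_eq_0_iff_char_dvd[of "j + 1", where 'a = 'a] by (simp add: char eq_neg_iff_add_eq_0 add.commute)

lemma two_neq_0: "(2 :: 'a) \<noteq> 0" and four_neq_0: "(4 :: 'a) \<noteq> 0"
  using of_nat_eq_0_iff_char_dvd[of 2, where 'a = 'a] of_nat_eq_0_iff_char_dvd[of 4, where 'a = 'a] p_ge_5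
  by (auto simp: char dest: dvd_imp_le)

lemma on_curve_eq: "a * u ^ n + b * v ^ m = 1"
  using on_curve by (simp add: on_curve_def)

lemma curve_terms_nonzero: "a * u ^ n \<noteq> 0" "b * v ^ m \<noteq> 0"
  using nonzero by simp_all

lemma branch_y_nth_0: "y $ 0 = v"
  and branch_equation: "fps_const a * x ^ n + fps_const b * y ^ m = 1"
proof -
  have "of_nat m \<noteq> (0::'a)" using not_dvd by (simp add: of_nat_eq_0_iff_char_dvd char)
  from theI' [OF branch_equation_ex1 [OF this nonzero(4,2) on_curve]]
  show "y $ 0 = v" "fps_const a * x ^ n + fps_const b * y ^ m = 1"
    by (simp_all add: branch_y_def branch_x_def)
qed

lemma fps_X_5_dvd_power_minus_const:
  fixes f :: "'a fps"
  assumes "p dvd k"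
  shows "fps_X ^ 5 dvd f ^ k - fps_const (f $ 0) ^ k"
  using fps_X_power_CHAR_dvd_power_minus_const[of k f] le_imp_power_dvd[OF p_ge_5, of "fps_X :: 'a fps"]
    assms prime by (auto simp: char intro: dvd_trans)

lemma branch_x_power_congruent: "p dvd k \<Longrightarrow> fps_X ^ 5 dvd x ^ k - fps_const u ^ k"
  using fps_X_5_dvd_power_minus_const[of k x] by (simp add: branch_x_def)

lemma branch_y_power_congruent: "p dvd k \<Longrightarrow> fps_X ^ 5 dvd y ^ k - fps_const v ^ k"
  using fps_X_5_dvd_power_minus_const[of k y] by (simp add: branch_y_nth_0)

lemma branch_x_reduction:
  assumes "p dvd e" "n * i + j = e + k"
  shows "fps_X ^ 5 dvd (fps_const a * x ^ n) ^ i * x ^ j - fps_const (a ^ i * u ^ e) * x ^ k"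
proof -
  have "(fps_const a * x ^ n) ^ i * x ^ j = fps_const (a ^ i) * x ^ e * x ^ k"
    by (simp add: power_mult_distrib mult.assoc assms(2) flip: power_mult power_add)
  then have "(fps_const a * x ^ n) ^ i * x ^ j - fps_const (a ^ i * u ^ e) * x ^ k
      = fps_const (a ^ i) * x ^ k * (x ^ e - fps_const u ^ e)"
    by (simp add: algebra_simps flip: fps_const_mult)
  with branch_x_power_congruent[OF assms(1)] show ?thesis by (simp add: dvd_mult)
qed

lemma branch_y_reduction:
  assumes "p dvd e" "m * i + j = e + k"
  shows "fps_X ^ 5 dvd (fps_const b * y ^ m) ^ i * y ^ j - fps_const (b ^ i * v ^ e) * y ^ k"
proof -
  have "(fps_const b * y ^ m) ^ i * y ^ j = fps_const (b ^ i) * y ^ e * y ^ k"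
    by (simp add: power_mult_distrib mult.assoc assms(2) flip: power_mult power_add)
  then have "(fps_const b * y ^ m) ^ i * y ^ j - fps_const (b ^ i * v ^ e) * y ^ k
      = fps_const (b ^ i) * y ^ k * (y ^ e - fps_const v ^ e)"
    by (simp add: algebra_simps flip: fps_const_mult)
  with branch_y_power_congruent[OF assms(1)] show ?thesis by (simp add: dvd_mult)
qed

lemma osculating_irreducible_if_order_5:
  assumes "is_conic H" "conic_disc H \<noteq> 0"
    and nonflex: "hessian_factor (of_nat n) (of_nat m) (a * u ^ n) (b * v ^ m) \<noteq> 0"
    and order: "fps_X ^ 5 dvd conic_eval_fps H x y 1"
  shows "osculating_conic a b n m u v H \<and> irreducible_conic H"
proof
  have "of_nat n \<noteq> (0::'a)" using not_dvd by (simp add: of_nat_eq_0_iff_char_dvd char)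
  then have "y $ 2 \<noteq> 0"
    using hessian_factor_eq_0_if_flex[of a u n b y m] branch_equation nonflex nonzero
    by (auto simp: branch_y_nth_0 branch_x_def)
  with order show "osculating_conic a b n m u v H"
    using osculating_conic_if_int_mult_ge_5 \<open>is_conic H\<close>
    by (simp add: int_mult_ge_iff numeral_eq_enat)
  show "irreducible_conic H" by (rule irreducible_conic_if_disc_nonzero) fact+
qed

lemma osculating_conic_m2_n2:
  assumes "p dvd m - 2" "p dvd n - 2"
  defines "H \<equiv> (a * u ^ (n - 2), b * v ^ (m - 2), -1, 0, 0, 0)"
  shows "osculating_conic a b n m u v H \<and> irreducible_conic H"
proof (rule osculating_irreducible_if_order_5)
  show "is_conic H" by (simp add: H_def is_conic_def)
  show "conic_disc H \<noteq> 0"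
    using nonzero two_neq_0 four_neq_0 by (simp add: H_def conic_disc_def algebra_simps)
  have residues: "of_nat m = (2::'a)" "of_nat n = (2::'a)"
    using assms exponents by (simp_all add: of_nat_eq_if_dvd_diff)
  have "hessian_factor N M S R \<noteq> 0" if "M = 2" "N = 2" "S + R = 1" for N M S R :: 'a
    using that two_neq_0 by (simp add: hessian_factor_diagonal)
  from this[OF residues on_curve_eq]
  show "hessian_factor (of_nat n) (of_nat m) (a * u ^ n) (b * v ^ m) \<noteq> 0" .
  have "fps_X ^ 5 dvd fps_const a * x ^ n - fps_const (a * u ^ (n - 2)) * x ^ 2"
    using branch_x_reduction[of "n - 2" 1 0 2] assms exponents by simp
  moreover have "fps_X ^ 5 dvd fps_const b * y ^ m - fps_const (b * v ^ (m - 2)) * y ^ 2"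
    using branch_y_reduction[of "m - 2" 1 0 2] assms exponents by simp
  ultimately show "fps_X ^ 5 dvd conic_eval_fps H x y 1"
    unfolding H_def by (rule conic_congruence_m2_n2[OF branch_equation])
qed

lemma osculating_conic_m_minus_1_n_minus_1:
  assumes "p dvd m + 1" "p dvd n + 1"
  defines "H \<equiv> (0, 0, 0, -1, b * v ^ (m + 1), a * u ^ (n + 1))"
  shows "osculating_conic a b n m u v H \<and> irreducible_conic H"
proof (rule osculating_irreducible_if_order_5)
  show "is_conic H" by (simp add: H_def is_conic_def)
  show "conic_disc H \<noteq> 0"
    using nonzero two_neq_0 four_neq_0 by (simp add: H_def conic_disc_def algebra_simps)
  have residues: "of_nat m = (-1::'a)" "of_nat n = (-1::'a)"
    using assms by (simp_all add: of_nat_eq_minus_1_if_dvd)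
  have "hessian_factor N M S R \<noteq> 0" if "M = -1" "N = -1" "S + R = 1" for N M S R :: 'a
    using that two_neq_0 by (simp add: hessian_factor_diagonal)
  from this[OF residues on_curve_eq]
  show "hessian_factor (of_nat n) (of_nat m) (a * u ^ n) (b * v ^ m) \<noteq> 0" .
  have "fps_X ^ 5 dvd fps_const a * x ^ n * x - fps_const (a * u ^ (n + 1))"
    using branch_x_reduction[of "n + 1" 1 1 0] assms exponents by simp
  moreover have "fps_X ^ 5 dvd fps_const b * y ^ m * y - fps_const (b * v ^ (m + 1))"
    using branch_y_reduction[of "m + 1" 1 1 0] assms exponents by simp
  ultimately show "fps_X ^ 5 dvd conic_eval_fps H x y 1"
    unfolding H_def by (rule conic_congruence_m_minus_1_n_minus_1[OF branch_equation])
qed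

lemma osculating_conic_m_half_n_half:
  assumes "p dvd 2 * m - 1" "p dvd 2 * n - 1"
  defines "H \<equiv> (a ^ 4 * u ^ (4 * n - 2), b ^ 4 * v ^ (4 * m - 2), 1,
      -2 * a ^ 2 * b ^ 2 * u ^ (2 * n - 1) * v ^ (2 * m - 1), -2 * a ^ 2 * u ^ (2 * n - 1),
      -2 * b ^ 2 * v ^ (2 * m - 1))"
  shows "osculating_conic a b n m u v H \<and> irreducible_conic H"
proof (rule osculating_irreducible_if_order_5)
  define A B where "A = a ^ 2 * u ^ (2 * n - 1)" and "B = b ^ 2 * v ^ (2 * m - 1)"
  have H_eq: "H = (A ^ 2, B ^ 2, 1, -2 * A * B, -2 * A, -2 * B)"
  proof -
    have "4 * n - 2 = (2 * n - 1) * 2" "4 * m - 2 = (2 * m - 1) * 2" by auto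
    then show ?thesis unfolding H_def A_def B_def by (simp add: power_mult_distrib flip: power_mult)
  qed
  show "is_conic H" by (simp add: H_def is_conic_def)
  have "conic_disc H = - ((4 * A * B) ^ 2)"
    by (simp add: H_eq conic_disc_def power2_eq_square algebra_simps)
  then show "conic_disc H \<noteq> 0" using nonzero four_neq_0 by (simp add: A_def B_def)
  have residues: "2 * of_nat m = (1::'a)" "2 * of_nat n = (1::'a)"
    using assms exponents of_nat_eq_if_dvd_diff[of "2 * m" 1] of_nat_eq_if_dvd_diff[of "2 * n" 1]
      by simp_all
  have "hessian_factor N M S R \<noteq> 0" if "2 * M = 1" "2 * N = 1" "S + R = 1" for N M S R :: 'a
    using that by (unfold hessian_factor_def) algebra
  from this[OF residues on_curve_eq]
  show "hessian_factor (of_nat n) (of_nat m) (a * u ^ n) (b * v ^ m) \<noteq> 0" .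
  have "fps_X ^ 5 dvd (fps_const a * x ^ n) ^ 2 - fps_const A * x"
    using branch_x_reduction[of "2 * n - 1" 2 0 1] assms exponents by (simp add: A_def)
  moreover have "fps_X ^ 5 dvd (fps_const b * y ^ m) ^ 2 - fps_const B * y"
    using branch_y_reduction[of "2 * m - 1" 2 0 1] assms exponents by (simp add: B_def)
  ultimately show "fps_X ^ 5 dvd conic_eval_fps H x y 1"
    unfolding H_eq by (rule conic_congruence_m_half_n_half[OF branch_equation])
qed

lemma osculating_conic_m_half_n1:
  assumes "p dvd 2 * m - 1" "p dvd n - 1"
  defines "H \<equiv> (-(a ^ 2 * u ^ (2 * n - 2)), 0, -1, 0, 2 * a * u ^ (n - 1), b ^ 2 * v ^ (2 * m - 1))"
  shows "osculating_conic a b n m u v H \<and> irreducible_conic H"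
proof (rule osculating_irreducible_if_order_5)
  define A B where "A = a * u ^ (n - 1)" and "B = b ^ 2 * v ^ (2 * m - 1)"
  have H_eq: "H = (- (A ^ 2), 0, -1, 0, 2 * A, B)"
  proof -
    have "2 * n - 2 = (n - 1) * 2" by auto
    then show ?thesis unfolding H_def A_def B_def by (simp add: power_mult_distrib flip: power_mult)
  qed
  show "is_conic H" by (simp add: H_def is_conic_def)
  show "conic_disc H \<noteq> 0"
    using nonzero two_neq_0 four_neq_0 by (simp add: H_eq A_def B_def conic_disc_def algebra_simps)
  have residues: "2 * of_nat m = (1::'a)" "of_nat n = (1::'a)"
    using assms exponents of_nat_eq_if_dvd_diff[of "2 * m" 1] of_nat_eq_if_dvd_diff[of n 1]
      by simp_all
  have "hessian_factor N M S R \<noteq> 0" if "2 * M = 1" "N = 1" "S \<noteq> 0" "S + R = 1" for N M S R :: 'a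
    using that by (unfold hessian_factor_def) algebra
  from this[OF residues curve_terms_nonzero(1) on_curve_eq]
  show "hessian_factor (of_nat n) (of_nat m) (a * u ^ n) (b * v ^ m) \<noteq> 0" .
  have "fps_X ^ 5 dvd fps_const a * x ^ n - fps_const A * x"
    using branch_x_reduction[of "n - 1" 1 0 1] assms exponents by (simp add: A_def)
  moreover have "fps_X ^ 5 dvd (fps_const b * y ^ m) ^ 2 - fps_const B * y"
    using branch_y_reduction[of "2 * m - 1" 2 0 1] assms exponents by (simp add: B_def)
  ultimately show "fps_X ^ 5 dvd conic_eval_fps H x y 1"
    unfolding H_eq by (rule conic_congruence_m_half_n1[OF branch_equation])
qed

lemma osculating_conic_m_minus_1_n1:
  assumes "p dvd m + 1" "p dvd n - 1"
  defines "H \<equiv> (0, 0, b * v ^ (m + 1), a * u ^ (n - 1), 0, -1)"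
  shows "osculating_conic a b n m u v H \<and> irreducible_conic H"
proof (rule osculating_irreducible_if_order_5)
  show "is_conic H" by (simp add: H_def is_conic_def)
  show "conic_disc H \<noteq> 0"
    using nonzero two_neq_0 four_neq_0 by (simp add: H_def conic_disc_def algebra_simps)
  have residues: "of_nat m = (-1::'a)" "of_nat n = (1::'a)"
    using assms exponents of_nat_eq_minus_1_if_dvd of_nat_eq_if_dvd_diff[of n 1] by simp_all
  have "hessian_factor N M S R \<noteq> 0" if "M = -1" "N = 1" "S \<noteq> 0" "S + R = 1" for N M S R :: 'a
    using that two_neq_0 by (simp add: hessian_factor_def)
  from this[OF residues curve_terms_nonzero(1) on_curve_eq]
  show "hessian_factor (of_nat n) (of_nat m) (a * u ^ n) (b * v ^ m) \<noteq> 0" .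
  have "fps_X ^ 5 dvd fps_const a * x ^ n - fps_const (a * u ^ (n - 1)) * x"
    using branch_x_reduction[of "n - 1" 1 0 1] assms exponents by simp
  moreover have "fps_X ^ 5 dvd fps_const b * y ^ m * y - fps_const (b * v ^ (m + 1))"
    using branch_y_reduction[of "m + 1" 1 1 0] assms exponents by simp
  ultimately show "fps_X ^ 5 dvd conic_eval_fps H x y 1"
    unfolding H_def by (rule conic_congruence_m_minus_1_n1[OF branch_equation])
qed

lemma osculating_conic_m2_n1:
  assumes "p dvd m - 2" "p dvd n - 1"
  defines "H \<equiv> (0, b * v ^ (m - 2), -1, 0, a * u ^ (n - 1), 0)"
  shows "osculating_conic a b n m u v H \<and> irreducible_conic H"
proof (rule osculating_irreducible_if_order_5)
  show "is_conic H" by (simp add: H_def is_conic_def)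
  show "conic_disc H \<noteq> 0"
    using nonzero two_neq_0 four_neq_0 by (simp add: H_def conic_disc_def algebra_simps)
  have residues: "of_nat m = (2::'a)" "of_nat n = (1::'a)"
    using assms exponents by (simp_all add: of_nat_eq_if_dvd_diff)
  have "hessian_factor N M S R \<noteq> 0" if "M = 2" "N = 1" "S \<noteq> 0" "S + R = 1" for N M S R :: 'a
    using that by (simp add: hessian_factor_def)
  from this[OF residues curve_terms_nonzero(1) on_curve_eq]
  show "hessian_factor (of_nat n) (of_nat m) (a * u ^ n) (b * v ^ m) \<noteq> 0" .
  have "fps_X ^ 5 dvd fps_const a * x ^ n - fps_const (a * u ^ (n - 1)) * x"
    using branch_x_reduction[of "n - 1" 1 0 1] assms exponents by simp
  moreover have "fps_X ^ 5 dvd fps_const b * y ^ m - fps_const (b * v ^ (m - 2)) * y ^ 2"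
    using branch_y_reduction[of "m - 2" 1 0 2] assms exponents by simp
  ultimately show "fps_X ^ 5 dvd conic_eval_fps H x y 1"
    unfolding H_def by (rule conic_congruence_m2_n1[OF branch_equation])
qed

lemma osculating_conic_m1_n2:
  assumes "p dvd m - 1" "p dvd n - 2"
  defines "H \<equiv> (a * u ^ (n - 2), 0, -1, 0, 0, b * v ^ (m - 1))"
  shows "osculating_conic a b n m u v H \<and> irreducible_conic H"
proof (rule osculating_irreducible_if_order_5)
  show "is_conic H" by (simp add: H_def is_conic_def)
  show "conic_disc H \<noteq> 0"
    using nonzero two_neq_0 four_neq_0 by (simp add: H_def conic_disc_def algebra_simps)
  have residues: "of_nat m = (1::'a)" "of_nat n = (2::'a)"
    using assms exponents by (simp_all add: of_nat_eq_if_dvd_diff)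
  have "hessian_factor N M S R \<noteq> 0" if "M = 1" "N = 2" "R \<noteq> 0" "S + R = 1" for N M S R :: 'a
    using that by (simp add: hessian_factor_def)
  from this[OF residues curve_terms_nonzero(2) on_curve_eq]
  show "hessian_factor (of_nat n) (of_nat m) (a * u ^ n) (b * v ^ m) \<noteq> 0" .
  have "fps_X ^ 5 dvd fps_const a * x ^ n - fps_const (a * u ^ (n - 2)) * x ^ 2"
    using branch_x_reduction[of "n - 2" 1 0 2] assms exponents by simp
  moreover have "fps_X ^ 5 dvd fps_const b * y ^ m - fps_const (b * v ^ (m - 1)) * y"
    using branch_y_reduction[of "m - 1" 1 0 1] assms exponents by simp
  ultimately show "fps_X ^ 5 dvd conic_eval_fps H x y 1"
    unfolding H_def by (rule conic_congruence_m1_n2[OF branch_equation])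
qed

lemma osculating_conic_m1_n_half:
  assumes "p dvd m - 1" "p dvd 2 * n - 1"
  defines "H \<equiv> (0, -(b ^ 2 * v ^ (2 * m - 2)), -1, 0, a ^ 2 * u ^ (2 * n - 1), 2 * b * v ^ (m - 1))"
  shows "osculating_conic a b n m u v H \<and> irreducible_conic H"
proof (rule osculating_irreducible_if_order_5)
  define A B where "A = a ^ 2 * u ^ (2 * n - 1)" and "B = b * v ^ (m - 1)"
  have H_eq: "H = (0, - (B ^ 2), -1, 0, A, 2 * B)"
  proof -
    have "2 * m - 2 = (m - 1) * 2" by auto
    then show ?thesis unfolding H_def A_def B_def by (simp add: power_mult_distrib flip: power_mult)
  qed
  show "is_conic H" by (simp add: H_def is_conic_def)
  show "conic_disc H \<noteq> 0"
    using nonzero two_neq_0 four_neq_0 by (simp add: H_eq A_def B_def conic_disc_def algebra_simps)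
  have residues: "of_nat m = (1::'a)" "2 * of_nat n = (1::'a)"
    using assms exponents of_nat_eq_if_dvd_diff[of m 1] of_nat_eq_if_dvd_diff[of "2 * n" 1]
      by simp_all
  have "hessian_factor N M S R \<noteq> 0" if "M = 1" "2 * N = 1" "R \<noteq> 0" "S + R = 1" for N M S R :: 'a
    using that by (unfold hessian_factor_def) algebra
  from this[OF residues curve_terms_nonzero(2) on_curve_eq]
  show "hessian_factor (of_nat n) (of_nat m) (a * u ^ n) (b * v ^ m) \<noteq> 0" .
  have "fps_X ^ 5 dvd (fps_const a * x ^ n) ^ 2 - fps_const A * x"
    using branch_x_reduction[of "2 * n - 1" 2 0 1] assms exponents by (simp add: A_def)
  moreover have "fps_X ^ 5 dvd fps_const b * y ^ m - fps_const B * y"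
    using branch_y_reduction[of "m - 1" 1 0 1] assms exponents by (simp add: B_def)
  ultimately show "fps_X ^ 5 dvd conic_eval_fps H x y 1"
    unfolding H_eq by (rule conic_congruence_m1_n_half[OF branch_equation])
qed

lemma osculating_conic_m1_n_minus_1:
  assumes "p dvd m - 1" "p dvd n + 1"
  defines "H \<equiv> (0, 0, a * u ^ (n + 1), b * v ^ (m - 1), -1, 0)"
  shows "osculating_conic a b n m u v H \<and> irreducible_conic H"
proof (rule osculating_irreducible_if_order_5)
  show "is_conic H" by (simp add: H_def is_conic_def)
  show "conic_disc H \<noteq> 0"
    using nonzero two_neq_0 four_neq_0 by (simp add: H_def conic_disc_def algebra_simps)
  have residues: "of_nat m = (1::'a)" "of_nat n = (-1::'a)"
    using assms exponents of_nat_eq_minus_1_if_dvd of_nat_eq_if_dvd_diff[of m 1] by simp_all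
  have "hessian_factor N M S R \<noteq> 0" if "M = 1" "N = -1" "R \<noteq> 0" "S + R = 1" for N M S R :: 'a
    using that two_neq_0 by (simp add: hessian_factor_def)
  from this[OF residues curve_terms_nonzero(2) on_curve_eq]
  show "hessian_factor (of_nat n) (of_nat m) (a * u ^ n) (b * v ^ m) \<noteq> 0" .
  have "fps_X ^ 5 dvd fps_const a * x ^ n * x - fps_const (a * u ^ (n + 1))"
    using branch_x_reduction[of "n + 1" 1 1 0] assms exponents by simp
  moreover have "fps_X ^ 5 dvd fps_const b * y ^ m - fps_const (b * v ^ (m - 1)) * y"
    using branch_y_reduction[of "m - 1" 1 0 1] assms exponents by simp
  ultimately show "fps_X ^ 5 dvd conic_eval_fps H x y 1"
    unfolding H_def by (rule conic_congruence_m1_n_minus_1[OF branch_equation])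
qed

end

theorem proposition3p6:
  fixes a b u v :: "'a::alg_closed_field"
    and p h q n m :: nat
  assumes "prime p" and "p > 5" and "h \<ge> 1" and "q = p ^ h"
    and "CHAR('a) = p"
    and "a \<noteq> 0" and "b \<noteq> 0" and "a ^ q = a" and "b ^ q = b"
    and "n \<ge> m" and "m > 2" and "\<not> p dvd (m * n)"
    and "classical_wrt 1 a b n m"
    and "\<not> classical_wrt 2 a b n m"
    and "on_curve a b n m u v" and "u \<noteq> 0" and "v \<noteq> 0"
  shows
   "(p dvd (m - 2) \<and> p dvd (n - 2) \<longrightarrow>
       (let H = (a*u^(n-2), b*v^(m-2), -1, 0, 0, 0) in
          osculating_conic a b n m u v H \<and> irreducible_conic H)) \<and>
    (p dvd (m + 1) \<and> p dvd (n + 1) \<longrightarrow>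
       (let H = (0, 0, 0, -1, b*v^(m+1), a*u^(n+1)) in
          osculating_conic a b n m u v H \<and> irreducible_conic H)) \<and>
    (p dvd (2*m - 1) \<and> p dvd (2*n - 1) \<longrightarrow>
       (let H = (a^4*u^(4*n-2), b^4*v^(4*m-2), 1, -2*a^2*b^2*u^(2*n-1)*v^(2*m-1),
                 -2*a^2*u^(2*n-1), -2*b^2*v^(2*m-1)) in
          osculating_conic a b n m u v H \<and> irreducible_conic H)) \<and>
    (p dvd (2*m - 1) \<and> p dvd (n - 1) \<longrightarrow>
       (let H = (-(a^2*u^(2*n-2)), 0, -1, 0, 2*a*u^(n-1), b^2*v^(2*m-1)) in
          osculating_conic a b n m u v H \<and> irreducible_conic H)) \<and>
    (p dvd (m + 1) \<and> p dvd (n - 1) \<longrightarrow>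
       (let H = (0, 0, b*v^(m+1), a*u^(n-1), 0, -1) in
          osculating_conic a b n m u v H \<and> irreducible_conic H)) \<and>
    (p dvd (m - 2) \<and> p dvd (n - 1) \<longrightarrow>
       (let H = (0, b*v^(m-2), -1, 0, a*u^(n-1), 0) in
          osculating_conic a b n m u v H \<and> irreducible_conic H)) \<and>
    (p dvd (m - 1) \<and> p dvd (n - 2) \<longrightarrow>
       (let H = (a*u^(n-2), 0, -1, 0, 0, b*v^(m-1)) in
          osculating_conic a b n m u v H \<and> irreducible_conic H)) \<and>
    (p dvd (m - 1) \<and> p dvd (2*n - 1) \<longrightarrow>
       (let H = (0, -(b^2*v^(2*m-2)), -1, 0, a^2*u^(2*n-1), 2*b*v^(m-1)) in
          osculating_conic a b n m u v H \<and> irreducible_conic H)) \<and>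
    (p dvd (m - 1) \<and> p dvd (n + 1) \<longrightarrow>
       (let H = (0, 0, a*u^(n+1), b*v^(m-1), -1, 0) in
          osculating_conic a b n m u v H \<and> irreducible_conic H))"
proof -
  have "\<not> p dvd m" "\<not> p dvd n"
    using \<open>\<not> p dvd (m * n)\<close> by (auto intro: dvd_mult dvd_mult2)
  moreover have "2 \<le> m" "2 \<le> n" using \<open>n \<ge> m\<close> \<open>m > 2\<close> by auto
  ultimately interpret fermat_curve_point p n m a b u v
    using assms by unfold_locales auto
  show ?thesis
    unfolding Let_def
    using osculating_conic_m2_n2 osculating_conic_m_minus_1_n_minus_1 osculating_conic_m_half_n_half
      osculating_conic_m_half_n1 osculating_conic_m_minus_1_n1 osculating_conic_m2_n1
      osculating_conic_m1_n2 osculating_conic_m1_n_half osculating_conic_m1_n_minus_1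
    by blast
qed

end
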